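(* Let $n\ge1$ be odd and $(\rho_i)_{i=0}^n$ a sequence in $\mathbb F$. The following are equivalent: (i) $(\rho_i)$ is constrained; (ii) the sequences $\rho_0,\rho_2,\ldots,\rho_{n-1}$ and $\rho_n^{-1},\rho_{n-2}^{-1},\ldots,\rho_1^{-1}$ are equal and geometric; (iii) there exist nonzero $s,\xi\in\mathbb F$ such that $\rho_i=\xi s^{i/2}$ for $i$ even and $\rho_i=\xi^{-1}s^{(i-n)/2}$ for $i$ odd ($0\le i\le n$). If these hold then $s=\rho_i/\rho_{i-2}$ for $2\le i\le n$ and $\xi=\rho_0$.
   Context: A sequence $(\rho_i)_{i=0}^n$ of scalars in a field $\mathbb F$ is constrained if (i) $\rho_i\rho_{n-i}=1$ for $0\le i\le n$, and (ii) there exist $a,b,c\in\mathbb F$, not all zero, with $a\rho_{i-1}+b\rho_i+c\rho_{i+1}=0$ for $1\le i\le n-1$. A sequence is geometric if all its terms are nonzero and the ratio of consecutive terms is constant. *)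

theory Defs
  imports Complex_Main
begin

text \<open>A sequence (rho_i) for i = 0..n, represented by rho :: nat => 'a (only values at 0..n matter).\<close>
definition constrained :: "nat \<Rightarrow> (nat \<Rightarrow> 'a::field) \<Rightarrow> bool" where
  "constrained n rho \<longleftrightarrow>
     (\<forall>i\<le>n. rho i * rho (n - i) = 1) \<and>
     (\<exists>a b c. \<not> (a = 0 \<and> b = 0 \<and> c = 0) \<and>
        (\<forall>i. 1 \<le> i \<and> i \<le> n - 1 \<longrightarrow> a * rho (i - 1) + b * rho i + c * rho (i + 1) = 0))"

definition geometric :: "'a::field list \<Rightarrow> bool" where
  "geometric xs \<longleftrightarrow> (\<forall>x\<in>set xs. x \<noteq> 0) \<and>
     (\<exists>r. \<forall>i. i + 1 < length xs \<longrightarrow> xs ! (i + 1) = r * xs ! i)"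

end

theory Submission
  imports Defs
begin

text \<open>
  The recurrence \<open>a \<rho>(k) + b \<rho>(k+1) + c \<rho>(k+2) = 0\<close>, read at the mirrored position and
  rewritten with \<open>\<rho>(n-i) = 1/\<rho>(i)\<close>, gives a second relation among the same three terms;
  eliminating \<open>a\<close> and \<open>c\<close> leaves \<open>b (\<rho>(k) \<rho>(k+2) - \<rho>(k+1)\<^sup>2) = 0\<close>. So if \<open>b \<noteq> 0\<close> the
  whole sequence is geometric, while if \<open>b = 0\<close> the recurrence itself links \<open>\<rho>(k)\<close> and
  \<open>\<rho>(k+2)\<close>. Either way \<open>\<rho>(k+2) = s \<rho>(k)\<close> for a fixed \<open>s \<noteq> 0\<close>: the even-indexed terms are
  \<open>\<rho>(0) s\<^sup>j\<close>, and since \<open>n\<close> is odd the odd-indexed terms are their mirrored reciprocals.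
  Conversely every such sequence satisfies the recurrence with \<open>(a, b, c) = (s, 0, -1)\<close>.
\<close>

definition parametrized :: "nat \<Rightarrow> (nat \<Rightarrow> 'a::field) \<Rightarrow> 'a \<Rightarrow> 'a \<Rightarrow> bool" where
  "parametrized n rho s \<xi> \<longleftrightarrow> s \<noteq> 0 \<and> \<xi> \<noteq> 0 \<and>
     (\<forall>i\<le>n. (even i \<longrightarrow> rho i = \<xi> * s ^ (i div 2)) \<and>
            (odd i \<longrightarrow> rho i = inverse \<xi> * inverse (s ^ ((n - i) div 2))))"

lemma power_int_half_diff_eq_inverse_power:
  fixes s :: "'a::field"
  assumes "odd i" "i \<le> n" "odd n"
  shows "s powi ((int i - int n) div 2) = inverse (s ^ ((n - i) div 2))"
proof -
  have "even (n - i)" using assms by simp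
  then obtain k where k: "n - i = 2 * k" by blast
  have "(int i - int n) div 2 = - int k" using k assms(2) by linarith
  then show ?thesis using k by (simp add: power_int_minus)
qed

lemma parametrized_iff_power_int:
  assumes "odd n"
  shows "(s \<noteq> 0 \<and> \<xi> \<noteq> 0 \<and>
           (\<forall>i\<le>n. (even i \<longrightarrow> rho i = \<xi> * s ^ (i div 2)) \<and>
                   (odd i \<longrightarrow> rho i = inverse \<xi> * s powi ((int i - int n) div 2))))
         \<longleftrightarrow> parametrized n rho s \<xi>"
  unfolding parametrized_def
  using power_int_half_diff_eq_inverse_power[OF _ _ assms, of _ s] by auto

lemma even_terms_eq_power:
  fixes rho :: "nat \<Rightarrow> 'a::comm_monoid_mult"
  assumes "\<And>j. 2 * (j + 1) \<le> n \<Longrightarrow> rho (2 * (j + 1)) = s * rho (2 * j)" and "2 * j \<le> n"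
  shows "rho (2 * j) = rho 0 * s ^ j"
  using assms(2)
proof (induction j)
  case (Suc j)
  then show ?case using assms(1)[of j] by (simp add: ac_simps)
qed simp

lemma consecutive_ratio_const:
  fixes f :: "nat \<Rightarrow> 'a::field"
  assumes sq: "\<And>k. k + 2 \<le> n \<Longrightarrow> f (k + 1) * f (k + 1) = f k * f (k + 2)"
    and nz: "\<And>k. k \<le> n \<Longrightarrow> f k \<noteq> 0"
    and "k + 1 \<le> n"
  shows "f (k + 1) = f 1 / f 0 * f k"
  using assms(3)
proof (induction k)
  case 0
  then show ?case using nz[of 0] by simp
next
  case (Suc k)
  let ?q = "f 1 / f 0"
  have IH: "f (k + 1) = ?q * f k" using Suc by simp
  have "f k * f (k + 2) = f k * (?q * ?q * f k)"
    using sq[of k] Suc.prems IH by (simp add: ac_simps)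
  moreover have "f k \<noteq> 0" using nz Suc.prems by simp
  ultimately have "f (k + 2) = ?q * ?q * f k" by (metis mult_left_cancel)
  then show ?case using IH by simp
qed

lemma square_eq_mult_if_reciprocal_relations:
  fixes x y z a b c :: "'a::field"
  assumes "x \<noteq> 0" "y \<noteq> 0" "z \<noteq> 0" "b \<noteq> 0"
    and rel: "a * x + b * y + c * z = 0"
    and rel_inv: "a * inverse z + b * inverse y + c * inverse x = 0"
  shows "y * y = x * z"
proof -
  have "x * y * z * (a * inverse z + b * inverse y + c * inverse x)
        = a * x * y + b * x * z + c * y * z"
    using assms(1-3) by (simp add: field_simps)
  with rel_inv have "a * x * y + b * x * z + c * y * z = 0" by simp
  moreover have "a * x * y + b * y * y + c * y * z = 0"
    using arg_cong[OF rel, of "\<lambda>t. t * y"] by (simp add: algebra_simps)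
  moreover have "b * (x * z - y * y)
      = (a * x * y + b * x * z + c * y * z) - (a * x * y + b * y * y + c * y * z)"
    by (simp add: algebra_simps)
  ultimately have "b * (x * z - y * y) = 0" by simp
  then show ?thesis using assms(4) by simp
qed

lemma constrained_reciprocal:
  "constrained n rho \<Longrightarrow> i \<le> n \<Longrightarrow> rho i * rho (n - i) = 1"
  unfolding constrained_def by blast

lemma constrained_nonzero:
  "constrained n rho \<Longrightarrow> i \<le> n \<Longrightarrow> rho i \<noteq> 0"
  using constrained_reciprocal by fastforce

lemma constrained_reflect:
  "constrained n rho \<Longrightarrow> i \<le> n \<Longrightarrow> rho (n - i) = inverse (rho i)"
  using constrained_reciprocal constrained_nonzero
  by (metis inverse_unique mult.commute)

lemma constrained_step2_ratio:
  fixes rho :: "nat \<Rightarrow> 'a::field"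
  assumes con: "constrained n rho"
  obtains s where "s \<noteq> 0" and "\<And>k. k + 2 \<le> n \<Longrightarrow> rho (k + 2) = s * rho k"
proof -
  have nz: "\<And>i. i \<le> n \<Longrightarrow> rho i \<noteq> 0" using constrained_nonzero[OF con] .
  obtain a b c where abc: "\<not> (a = 0 \<and> b = 0 \<and> c = 0)"
    and rec: "\<And>i. 1 \<le> i \<Longrightarrow> i \<le> n - 1 \<Longrightarrow> a * rho (i - 1) + b * rho i + c * rho (i + 1) = 0"
    using con unfolding constrained_def by blast
  have rec': "a * rho k + b * rho (k + 1) + c * rho (k + 2) = 0" if "k + 2 \<le> n" for k
    using rec[of "k + 1"] that by (simp add: add.commute)
  consider "n < 2" | "b = 0" "2 \<le> n" | "b \<noteq> 0" "2 \<le> n" by fastforce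
  then show thesis
  proof cases
    case 1
    then show thesis by (intro that[of 1]) auto
  next
    case 2
    have "a * rho 0 + c * rho 2 = 0" using rec'[of 0] 2 by (simp add: numeral_2_eq_2)
    then have "a \<noteq> 0" "c \<noteq> 0" using abc 2 nz[of 0] nz[of 2] by auto
    show thesis
    proof (rule that[of "- a / c"])
      show "- a / c \<noteq> 0" using \<open>a \<noteq> 0\<close> \<open>c \<noteq> 0\<close> by simp
      fix k assume "k + 2 \<le> n"
      then have "a * rho k + c * rho (k + 2) = 0" using rec' \<open>b = 0\<close> by simp
      then show "rho (k + 2) = - a / c * rho k" using \<open>c \<noteq> 0\<close>
        by (simp add: field_simps add_eq_0_iff)
    qed
  next
    case 3
    have sq: "rho (k + 1) * rho (k + 1) = rho k * rho (k + 2)" if k: "k + 2 \<le> n" for k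
    proof (rule square_eq_mult_if_reciprocal_relations[where a = a and b = b and c = c])
      show "rho k \<noteq> 0" "rho (k + 1) \<noteq> 0" "rho (k + 2) \<noteq> 0" "b \<noteq> 0" using nz k 3 by auto
      show "a * rho k + b * rho (k + 1) + c * rho (k + 2) = 0" using rec' k .
      have "a * rho (n - (k + 2)) + b * rho (n - (k + 1)) + c * rho (n - k) = 0"
        using rec'[of "n - (k + 2)"] k by (simp add: Suc_diff_Suc numeral_2_eq_2)
      then show "a * inverse (rho (k + 2)) + b * inverse (rho (k + 1)) + c * inverse (rho k) = 0"
        using constrained_reflect[OF con] k by simp
    qed
    let ?q = "rho 1 / rho 0"
    have step: "rho (k + 1) = ?q * rho k" if "k + 1 \<le> n" for k
      using consecutive_ratio_const[OF sq nz that] by simp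
    show thesis
    proof (rule that[of "?q * ?q"])
      show "?q * ?q \<noteq> 0" using nz[of 0] nz[of 1] 3 by simp
      fix k assume "k + 2 \<le> n"
      then show "rho (k + 2) = ?q * ?q * rho k" using step[of k] step[of "k + 1"] by simp
    qed
  qed
qed

lemma parametrizedI:
  fixes rho :: "nat \<Rightarrow> 'a::field"
  assumes "odd n" "s \<noteq> 0" "rho 0 \<noteq> 0"
    and even_terms: "\<And>j. 2 * j \<le> n \<Longrightarrow> rho (2 * j) = rho 0 * s ^ j"
    and odd_terms: "\<And>i. i \<le> n \<Longrightarrow> odd i \<Longrightarrow> rho i = inverse (rho (n - i))"
  shows "parametrized n rho s (rho 0)"
  unfolding parametrized_def
proof (intro conjI allI impI)
  fix i assume i: "i \<le> n"
  show "rho i = rho 0 * s ^ (i div 2)" if "even i"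
    using even_terms[of "i div 2"] i that by simp
  show "rho i = inverse (rho 0) * inverse (s ^ ((n - i) div 2))" if "odd i"
  proof -
    have "even (n - i)" using assms(1) that i by simp
    then show ?thesis
      using odd_terms[OF i that] even_terms[of "(n - i) div 2"] by (simp add: inverse_mult_distrib)
  qed
qed (use assms in auto)

context
  fixes n :: nat and rho :: "nat \<Rightarrow> 'a::field" and s \<xi> :: 'a
  assumes par: "parametrized n rho s \<xi>"
begin

lemma parametrized_nonzero: "s \<noteq> 0" "\<xi> \<noteq> 0"
  using par unfolding parametrized_def by auto

lemma parametrized_even: "i \<le> n \<Longrightarrow> even i \<Longrightarrow> rho i = \<xi> * s ^ (i div 2)"
  using par unfolding parametrized_def by auto

lemma parametrized_odd:
  "i \<le> n \<Longrightarrow> odd i \<Longrightarrow> rho i = inverse \<xi> * inverse (s ^ ((n - i) div 2))"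
  using par unfolding parametrized_def by auto

lemma parametrized_term_nonzero: "i \<le> n \<Longrightarrow> rho i \<noteq> 0"
  using parametrized_even parametrized_odd parametrized_nonzero by (cases "even i") auto

lemma parametrized_reciprocal:
  assumes odd_n: "odd n" and "i \<le> n"
  shows "rho i * rho (n - i) = 1"
proof (cases "even i")
  case True
  then have "odd (n - i)" "n - (n - i) = i" using odd_n assms by simp_all
  then show ?thesis
    using parametrized_even[OF assms(2) True] parametrized_odd[of "n - i"] parametrized_nonzero
    by (simp add: field_simps)
next
  case False
  then have "even (n - i)" using odd_n assms by simp
  then show ?thesis
    using parametrized_odd[OF assms(2) False] parametrized_even[of "n - i"] parametrized_nonzero
    by (simp add: field_simps)
qed

lemma parametrized_step2:
  assumes "k + 2 \<le> n"
  shows "rho (k + 2) = s * rho k"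
proof (cases "even k")
  case True
  then show ?thesis
    using parametrized_even[of k] parametrized_even[of "k + 2"] assms by simp
next
  case False
  define e where "e = (n - (k + 2)) div 2"
  have "(n - k) div 2 = Suc e" using assms by (simp add: e_def)
  then have "rho k = inverse \<xi> * inverse (s * s ^ e)"
    using False parametrized_odd[of k] assms by simp
  moreover have "rho (k + 2) = inverse \<xi> * inverse (s ^ e)"
    using False parametrized_odd[of "k + 2"] assms by (simp add: e_def)
  ultimately show ?thesis using parametrized_nonzero by (simp add: inverse_mult_distrib)
qed

lemma parametrized_constrained:
  assumes "odd n"
  shows "constrained n rho"
proof -
  have "s * rho (i - 1) + 0 * rho i + - 1 * rho (i + 1) = 0" if "1 \<le> i" "i \<le> n - 1" for i
  proof -
    have "rho (i - 1 + 2) = s * rho (i - 1)" using that by (intro parametrized_step2) simp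
    with that show ?thesis by (simp add: numeral_2_eq_2)
  qed
  then show ?thesis
    unfolding constrained_def
    using parametrized_reciprocal[OF assms] parametrized_nonzero by blast
qed

lemma parametrized_ratios:
  "(\<forall>i. 2 \<le> i \<and> i \<le> n \<longrightarrow> s = rho i / rho (i - 2)) \<and> \<xi> = rho 0"
proof (intro conjI allI impI)
  fix i assume i: "2 \<le> i \<and> i \<le> n"
  then obtain k where "i = k + 2" by (metis add.commute le_Suc_ex)
  then have "rho i = s * rho (i - 2)" using i parametrized_step2[of k] by simp
  moreover have "rho (i - 2) \<noteq> 0" using i by (intro parametrized_term_nonzero) arith
  ultimately show "s = rho i / rho (i - 2)" by simp
qed (use parametrized_even[of 0] in simp)

end

lemma constrained_iff_parametrized:
  fixes rho :: "nat \<Rightarrow> 'a::field"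
  assumes "odd n"
  shows "constrained n rho \<longleftrightarrow> (\<exists>s \<xi>. parametrized n rho s \<xi>)"
proof
  assume con: "constrained n rho"
  obtain s where "s \<noteq> 0" and step: "\<And>k. k + 2 \<le> n \<Longrightarrow> rho (k + 2) = s * rho k"
    using constrained_step2_ratio[OF con] by blast
  have "parametrized n rho s (rho 0)"
  proof (rule parametrizedI[OF assms \<open>s \<noteq> 0\<close>])
    show "rho 0 \<noteq> 0" using constrained_nonzero[OF con] by simp
    show "rho (2 * j) = rho 0 * s ^ j" if "2 * j \<le> n" for j
      using even_terms_eq_power[of n rho s] step that by simp
    show "rho i = inverse (rho (n - i))" if "i \<le> n" for i
      using constrained_reflect[OF con, of "n - i"] that by simp
  qed
  then show "\<exists>s \<xi>. parametrized n rho s \<xi>" by blast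
qed (use parametrized_constrained assms in blast)

lemma geometric_map_upt_iff:
  "geometric (map f [0..<m]) \<longleftrightarrow>
     (\<forall>j<m. f j \<noteq> 0) \<and> (\<exists>r. \<forall>j. j + 1 < m \<longrightarrow> f (j + 1) = r * f j)"
  unfolding geometric_def by (auto simp del: upt_Suc)

lemma lists_iff_parametrized:
  fixes rho :: "nat \<Rightarrow> 'a::field"
  assumes odd_n: "odd n"
  defines "m \<equiv> (n + 1) div 2"
  shows "(map (\<lambda>j. rho (2 * j)) [0..<m] = map (\<lambda>j. inverse (rho (n - 2 * j))) [0..<m]
          \<and> geometric (map (\<lambda>j. rho (2 * j)) [0..<m])
          \<and> geometric (map (\<lambda>j. inverse (rho (n - 2 * j))) [0..<m]))
         \<longleftrightarrow> (\<exists>s \<xi>. parametrized n rho s \<xi>)"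
    (is "?eq \<and> ?geom \<and> ?geom' \<longleftrightarrow> _")
proof
  assume lists: "?eq \<and> ?geom \<and> ?geom'"
  have below_m: "2 * j \<le> n \<longleftrightarrow> j < m" for j using odd_n unfolding m_def by presburger
  have reflect: "rho (2 * j) = inverse (rho (n - 2 * j))" if "2 * j \<le> n" for j
    using lists that below_m by (simp add: map_eq_conv)
  obtain r where nz: "\<And>j. 2 * j \<le> n \<Longrightarrow> rho (2 * j) \<noteq> 0"
    and r: "\<And>j. 2 * (j + 1) \<le> n \<Longrightarrow> rho (2 * (j + 1)) = r * rho (2 * j)"
    using lists unfolding geometric_map_upt_iff below_m[symmetric] by blast
  \<comment> \<open>the ratio is irrelevant (hence replaceable by 1) when the even subsequence has one term\<close>
  define s where "s = (if r = 0 then 1 else r)"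
  have step: "rho (2 * (j + 1)) = s * rho (2 * j)" if "2 * (j + 1) \<le> n" for j
    using r[of j] nz[of "j + 1"] that by (auto simp: s_def)
  have "parametrized n rho s (rho 0)"
  proof (rule parametrizedI[OF odd_n])
    show "s \<noteq> 0" "rho 0 \<noteq> 0" using nz[of 0] by (simp_all add: s_def)
    show "rho (2 * j) = rho 0 * s ^ j" if "2 * j \<le> n" for j
      using even_terms_eq_power[of n rho s, OF step that] .
    show "rho i = inverse (rho (n - i))" if "i \<le> n" "odd i" for i
    proof -
      have "n - i = 2 * ((n - i) div 2)" using odd_n that by simp
      then show ?thesis using reflect[of "(n - i) div 2"] that by simp
    qed
  qed
  then show "\<exists>s \<xi>. parametrized n rho s \<xi>" by blast
next
  assume "\<exists>s \<xi>. parametrized n rho s \<xi>"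
  then obtain s \<xi> where par: "parametrized n rho s \<xi>" by blast
  have below_m: "j < m \<Longrightarrow> 2 * j \<le> n" for j using odd_n unfolding m_def by presburger
  have reflect: "inverse (rho (n - 2 * j)) = rho (2 * j)" if "j < m" for j
    using parametrized_reciprocal[OF par odd_n, of "2 * j"] below_m[OF that]
    by (metis inverse_unique mult.commute)
  have ?eq using reflect by (simp add: map_eq_conv)
  moreover have ?geom
  proof -
    have "rho (2 * (j + 1)) = s * rho (2 * j)" if "j + 1 < m" for j
      using parametrized_step2[OF par, of "2 * j"] below_m[OF that] by simp
    then show ?thesis
      unfolding geometric_map_upt_iff
      using parametrized_term_nonzero[OF par] below_m by auto
  qed
  ultimately show "?eq \<and> ?geom \<and> ?geom'" by metis
qed

theorem proposition11p6:
  fixes n :: nat and rho :: "nat \<Rightarrow> 'a::field"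
  assumes "n \<ge> 1" and "odd n"
  shows "(constrained n rho
            \<longleftrightarrow> (map (\<lambda>j. rho (2 * j)) [0..<(n + 1) div 2]
                   = map (\<lambda>j. inverse (rho (n - 2 * j))) [0..<(n + 1) div 2]
                 \<and> geometric (map (\<lambda>j. rho (2 * j)) [0..<(n + 1) div 2])
                 \<and> geometric (map (\<lambda>j. inverse (rho (n - 2 * j))) [0..<(n + 1) div 2])))
       \<and> (constrained n rho
            \<longleftrightarrow> (\<exists>s \<xi>. s \<noteq> 0 \<and> \<xi> \<noteq> 0 \<and>
                  (\<forall>i\<le>n. (even i \<longrightarrow> rho i = \<xi> * s ^ (i div 2)) \<and>
                          (odd i \<longrightarrow> rho i = inverse \<xi> * s powi ((int i - int n) div 2)))))
       \<and> (\<forall>s \<xi>. s \<noteq> 0 \<and> \<xi> \<noteq> 0 \<and>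
                  (\<forall>i\<le>n. (even i \<longrightarrow> rho i = \<xi> * s ^ (i div 2)) \<and>
                          (odd i \<longrightarrow> rho i = inverse \<xi> * s powi ((int i - int n) div 2)))
              \<longrightarrow> (\<forall>i. 2 \<le> i \<and> i \<le> n \<longrightarrow> s = rho i / rho (i - 2)) \<and> \<xi> = rho 0)"
  unfolding parametrized_iff_power_int[OF assms(2)]
    constrained_iff_parametrized[OF assms(2)] lists_iff_parametrized[OF assms(2)]
  using parametrized_ratios by blast

end
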